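(* Fix $s\in[-1,1)$. Let $\hat{\varrho}$ be a single-mode bosonic state that is P-classical, i.e. its $s$-parameterized quasiprobability distribution in position-momentum coordinates can be written as $W_{\hat{\varrho}}(q,p;s)=\int dq'\,dp'\,P(q',p')\,W_{q',p'}(q,p;s)$ with $P\ge 0$ and $\int P=1$. Let $w(q,0;s)=\int dp\,W_{\hat{\varrho}}(q,p;s)$ be its $s$-parameterized position tomogram. Let $G\ge 0$ be a normalized function on $\mathbb{R}$ with finite support and define the fictitious tomogram $$w_{\rm f}(p,\tfrac{\pi}{2};s)=\frac{1}{\sqrt{\pi(1-s)}}\int dp'\,G(p')\,e^{-\frac{(p-p')^2}{1-s}}.$$ Then the function $W_{\rm f}(q,p;s):=w(q,0;s)\,w_{\rm f}(p,\tfrac{\pi}{2};s)$ satisfies $$W_{\rm f}(q,p;s)=\int dq'\,dp'\,F(q')G(p')\,W_{q',p'}(q,p;s),\qquad F(q')=\int dp'\,P(q',p'),$$ so that $W_{\rm f}$ is the $s$-parameterized quasiprobability distribution of a bona fide P-classical quantum state (with P-function $F(q')G(p')$). Consequently, if $W_{\rm f}(q,p;s)$ is not the $s$-parameterized distribution of any legitimate quantum state, then $\hat{\varrho}$ is P-nonclassical. In particular this applies to the choices $w_{\rm f}(p,\tfrac{\pi}{2};s)=\frac{1}{\sqrt{\pi(1-s)}}e^{-p^2/(1-s)}$ (the vacuum tomogram) and $w_{\rm f}(p,\tfrac{\pi}{2};s)=w(p,0;s)$ (the state's own tomogram evaluated at $p$).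
   Context: For $q_0,p_0\in\mathbb{R}$ (corresponding to the coherent state $|\alpha\rangle$ with $q_0=\sqrt{2}\,\mathrm{Re}\,\alpha$, $p_0=\sqrt{2}\,\mathrm{Im}\,\alpha$), its $s$-parameterized quasiprobability distribution in position-momentum coordinates is $W_{q_0,p_0}(q,p;s)=\frac{1}{\pi(1-s)}\exp\{-[(q-q_0)^2+(p-p_0)^2]/(1-s)\}$. The $s$-parameterized quasiprobability distribution of an operator $\hat\Lambda$ is $\mathscr{W}_{\hat\Lambda}(\alpha;s)=\mathrm{Tr}\,\hat\Lambda\hat{T}(\alpha;s)$, where $\hat{T}(\alpha;s)=\frac{1}{\pi}\int d^2\xi\,\exp\{\alpha\xi^*-\alpha^*\xi+\tfrac{s}{2}|\xi|^2\}\exp\{\xi a^\dagger-\xi^*a\}$; $s=1$ gives the P-function, $s=0$ the Wigner function, $s=-1$ the Q-function. A state is P-classical if its P-function is a nonnegative probability density, and P-nonclassical otherwise. *)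

theory Defs
  imports "HOL-Probability.Probability"
begin

text \<open>s-parameterized quasiprobability distribution of the coherent state with
  phase-space centre (q0,p0), in position-momentum coordinates.\<close>
definition coh_qpd :: "real \<Rightarrow> real \<Rightarrow> real \<Rightarrow> real \<Rightarrow> real \<Rightarrow> real" where
  "coh_qpd s q0 p0 q p = exp (- ((q - q0)^2 + (p - p0)^2) / (1 - s)) / (pi * (1 - s))"

text \<open>Measures (rather than density functions) are used so that singular
  P-functions such as the delta function of the vacuum are included.\<close>
definition qpd_of_meas :: "real \<Rightarrow> (real \<times> real) measure \<Rightarrow> real \<Rightarrow> real \<Rightarrow> real" where
  "qpd_of_meas s M q p = (\<integral>z. coh_qpd s (fst z) (snd z) q p \<partial>M)"

definition is_P_distribution :: "(real \<times> real) measure \<Rightarrow> bool" where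
  "is_P_distribution M \<longleftrightarrow> prob_space M \<and> sets M = sets (borel :: (real \<times> real) measure)"

definition P_classical_qpd :: "real \<Rightarrow> (real \<Rightarrow> real \<Rightarrow> real) \<Rightarrow> bool" where
  "P_classical_qpd s W \<longleftrightarrow> (\<exists>M. is_P_distribution M \<and> (\<forall>q p. W q p = qpd_of_meas s M q p))"

definition pos_tomogram :: "(real \<Rightarrow> real \<Rightarrow> real) \<Rightarrow> real \<Rightarrow> real" where
  "pos_tomogram W q = (\<integral>p. W q p \<partial>lborel)"

definition fict_tomogram :: "real \<Rightarrow> (real \<Rightarrow> real) \<Rightarrow> real \<Rightarrow> real" where
  "fict_tomogram s G p = (\<integral>p'. G p' * exp (- ((p - p')^2) / (1 - s)) \<partial>lborel) / sqrt (pi * (1 - s))"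

definition vac_tomogram :: "real \<Rightarrow> real \<Rightarrow> real" where
  "vac_tomogram s p = exp (- (p^2) / (1 - s)) / sqrt (pi * (1 - s))"

end

theory Submission imports Defs begin

text \<open>The coherent-state distribution factorises into two Gaussians of variance (1 - s)/2, one
  in position and one in momentum.  Integrating a mixture of coherent states over p therefore
  leaves the mixture of the position Gaussians weighted by the position marginal of the
  P-function, so each of the three tomograms is a Gaussian smearing of a probability measure
  on the line.  The product of two such tomograms is then the distribution of the state whose
  P-function is the product of the two measures, and a product of probability measures is again
  a probability measure.\<close>

definition coh_kernel :: "real \<Rightarrow> real \<Rightarrow> real \<Rightarrow> real" where
  "coh_kernel s m x = normal_density m (sqrt ((1 - s) / 2)) x"

lemma coh_kernel_eq:
  assumes "s < 1"
  shows "coh_kernel s m x = exp (- ((x - m)^2) / (1 - s)) / sqrt (pi * (1 - s))"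
proof -
  have "(sqrt ((1 - s) / 2))^2 = (1 - s) / 2" using assms by simp
  then have "2 * (sqrt ((1 - s) / 2))^2 = 1 - s" "2 * pi * (sqrt ((1 - s) / 2))^2 = pi * (1 - s)"
    by simp_all
  then show ?thesis unfolding coh_kernel_def normal_density_def by simp
qed

lemma coh_kernel_measurable [measurable]: "(\<lambda>z. coh_kernel s (f z) (g z)) \<in> borel_measurable N"
  if [measurable]: "f \<in> borel_measurable N" "g \<in> borel_measurable N"
  unfolding coh_kernel_def normal_density_def by measurable

lemma coh_kernel_nonneg: "0 \<le> coh_kernel s m x"
  unfolding coh_kernel_def by simp

lemma coh_kernel_le:
  assumes "s < 1"
  shows "coh_kernel s m x \<le> 1 / sqrt (pi * (1 - s))"
proof -
  have "exp (- ((x - m)^2) / (1 - s)) \<le> 1" using assms by simp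
  moreover have "0 < sqrt (pi * (1 - s))" using assms by simp
  ultimately show ?thesis unfolding coh_kernel_eq[OF assms] by (simp add: divide_right_mono)
qed

lemma integral_coh_kernel: "s < 1 \<Longrightarrow> (\<integral>x. coh_kernel s m x \<partial>lborel) = 1"
  unfolding coh_kernel_def by (rule integral_normal_density) simp

lemma integrable_coh_kernel: "s < 1 \<Longrightarrow> integrable lborel (coh_kernel s m)"
  unfolding coh_kernel_def by (rule integrable_normal_density) simp

lemma coh_qpd_eq_coh_kernel_product:
  assumes "s < 1"
  shows "coh_qpd s q0 p0 q p = coh_kernel s q0 q * coh_kernel s p0 p"
proof -
  have "sqrt (pi * (1 - s)) * sqrt (pi * (1 - s)) = pi * (1 - s)" using assms by simp
  then show ?thesis unfolding coh_qpd_def coh_kernel_eq[OF assms]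
    by (simp add: field_simps exp_add[symmetric] diff_divide_distrib add_divide_distrib)
qed

lemma (in prob_space) integrable_coh_kernel_comp:
  assumes "s < 1" and "f \<in> borel_measurable M"
  shows "integrable M (\<lambda>z. coh_kernel s (f z) x)"
  by (rule integrable_const_bound[where B = "1 / sqrt (pi * (1 - s))"])
     (use assms coh_kernel_le coh_kernel_nonneg in auto)

lemma pair_prob_spaceI: "prob_space A \<Longrightarrow> prob_space B \<Longrightarrow> pair_prob_space A B"
  by (simp add: pair_prob_space_def pair_sigma_finite_def prob_space_imp_sigma_finite)

lemma sets_pair_measure_borel:
  fixes A B :: "real measure"
  assumes "sets A = sets borel" and "sets B = sets borel"
  shows "sets (A \<Otimes>\<^sub>M B) = sets (borel :: (real \<times> real) measure)"
  unfolding borel_prod[symmetric] using assms by (rule sets_pair_measure_cong)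

lemma is_P_distribution_pair_measure:
  fixes A B :: "real measure"
  assumes "prob_space A" "prob_space B" "sets A = sets borel" "sets B = sets borel"
  shows "is_P_distribution (A \<Otimes>\<^sub>M B)"
proof -
  interpret pair_prob_space A B using assms(1,2) by (rule pair_prob_spaceI)
  show ?thesis unfolding is_P_distribution_def
    using P.prob_space_axioms sets_pair_measure_borel[OF assms(3,4)] by simp
qed

lemma qpd_of_meas_pair_measure:
  fixes A B :: "real measure"
  assumes s: "s < 1" and "prob_space A" "prob_space B"
    and sA: "sets A = sets borel" and sB: "sets B = sets borel"
  shows "qpd_of_meas s (A \<Otimes>\<^sub>M B) q p = (\<integral>x. coh_kernel s x q \<partial>A) * (\<integral>y. coh_kernel s y p \<partial>B)"
proof -
  interpret pair_prob_space A B using assms(2,3) by (rule pair_prob_spaceI)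
  let ?f = "\<lambda>(x, y). coh_kernel s x q * coh_kernel s y p"
  let ?c = "1 / sqrt (pi * (1 - s))"
  have f_meas: "?f \<in> borel_measurable (A \<Otimes>\<^sub>M B)"
    unfolding measurable_cong_sets[OF sets_pair_measure_borel[OF sA sB] refl] borel_prod[symmetric]
    by measurable
  have f_bound: "\<bar>?f z\<bar> \<le> ?c * ?c" for z
  proof -
    have "coh_kernel s (fst z) q * coh_kernel s (snd z) p \<le> ?c * ?c"
      by (rule mult_mono) (use coh_kernel_le[OF s] coh_kernel_nonneg s in auto)
    then show ?thesis by (simp add: split_beta abs_mult coh_kernel_nonneg)
  qed
  have "integrable (A \<Otimes>\<^sub>M B) ?f"
    by (rule P.integrable_const_bound[where B = "?c * ?c", OF AE_I2 f_meas]) (metis real_norm_def f_bound)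
  then have "(\<integral>x. \<integral>y. coh_kernel s x q * coh_kernel s y p \<partial>B \<partial>A) = (\<integral>z. ?f z \<partial>(A \<Otimes>\<^sub>M B))"
    by (rule integral_fst)
  then show ?thesis
    by (simp add: qpd_of_meas_def coh_qpd_eq_coh_kernel_product[OF s] split_beta)
qed

lemma P_classical_qpd_product:
  fixes A B :: "real measure"
  assumes "s < 1" and "prob_space A" "prob_space B" "sets A = sets borel" "sets B = sets borel"
  shows "P_classical_qpd s (\<lambda>q p. (\<integral>x. coh_kernel s x q \<partial>A) * (\<integral>y. coh_kernel s y p \<partial>B))"
  unfolding P_classical_qpd_def
  using is_P_distribution_pair_measure[OF assms(2-)] qpd_of_meas_pair_measure[OF assms] by metis

lemma measurable_P_distribution:
  "is_P_distribution M \<Longrightarrow> measurable M N = measurable (borel \<Otimes>\<^sub>M borel) N"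
  unfolding is_P_distribution_def borel_prod by (intro measurable_cong_sets) auto

lemma prob_space_distr_fst:
  assumes "is_P_distribution M"
  shows "prob_space (distr M lborel fst)"
proof -
  interpret prob_space M using assms unfolding is_P_distribution_def by blast
  show ?thesis
    by (rule prob_space_distr) (simp add: measurable_P_distribution[OF assms])
qed

lemma prob_space_density_lborel:
  assumes "G \<in> borel_measurable borel" and "\<forall>p. 0 \<le> G p"
    and "integrable lborel G" and "(\<integral>p. G p \<partial>lborel) = 1"
  shows "prob_space (density lborel G)"
proof
  have "emeasure (density lborel G) (space (density lborel G)) = (\<integral>\<^sup>+x. ennreal (G x) \<partial>lborel)"
    using assms(1) by (simp add: emeasure_density)
  also have "\<dots> = ennreal (\<integral>x. G x \<partial>lborel)"
    using assms(2,3) by (intro nn_integral_eq_integral) auto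
  finally show "emeasure (density lborel G) (space (density lborel G)) = 1"
    using assms(4) by simp
qed

lemma pos_tomogram_qpd_of_meas:
  assumes s: "s < 1" and M: "is_P_distribution M"
  shows "pos_tomogram (qpd_of_meas s M) q = (\<integral>x. coh_kernel s x q \<partial>distr M lborel fst)"
proof -
  interpret M: prob_space M using M unfolding is_P_distribution_def by blast
  interpret pair_sigma_finite M lborel
    by (simp add: pair_sigma_finite_def M.sigma_finite_measure_axioms lborel.sigma_finite_measure_axioms)
  have fst_meas: "fst \<in> borel_measurable M"
    by (simp add: measurable_P_distribution[OF M])
  let ?f = "\<lambda>(z, y). coh_kernel s (fst z) q * coh_kernel s (snd z) y"
  have "sets M = sets (borel \<Otimes>\<^sub>M borel)"
    using M unfolding is_P_distribution_def borel_prod by simp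
  then have sets_M_lborel: "sets (M \<Otimes>\<^sub>M lborel) = sets ((borel \<Otimes>\<^sub>M borel) \<Otimes>\<^sub>M borel)"
    using sets_lborel by (rule sets_pair_measure_cong)
  have f_meas: "?f \<in> borel_measurable (M \<Otimes>\<^sub>M lborel)"
    unfolding measurable_cong_sets[OF sets_M_lborel refl] by measurable
  have inner: "(\<integral>y. ?f (z, y) \<partial>lborel) = coh_kernel s (fst z) q" for z
    using integral_coh_kernel[OF s] by simp
  have f_int: "integrable (M \<Otimes>\<^sub>M lborel) ?f"
  proof (rule Fubini_integrable[OF f_meas])
    have "(\<integral>y. norm (?f (z, y)) \<partial>lborel) = coh_kernel s (fst z) q" for z
      using inner by (simp add: abs_mult coh_kernel_nonneg)
    then show "integrable M (\<lambda>z. \<integral>y. norm (?f (z, y)) \<partial>lborel)"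
      using M.integrable_coh_kernel_comp[OF s fst_meas] by simp
    show "AE z in M. integrable lborel (\<lambda>y. ?f (z, y))"
      using integrable_coh_kernel[OF s] by simp
  qed
  have "pos_tomogram (qpd_of_meas s M) q = (\<integral>y. \<integral>z. ?f (z, y) \<partial>M \<partial>lborel)"
    by (simp add: pos_tomogram_def qpd_of_meas_def coh_qpd_eq_coh_kernel_product[OF s])
  also have "\<dots> = (\<integral>z. \<integral>y. ?f (z, y) \<partial>lborel \<partial>M)"
    by (rule Fubini_integral) (use f_int in simp)
  also have "\<dots> = (\<integral>z. coh_kernel s (fst z) q \<partial>M)"
    by (simp only: inner)
  also have "\<dots> = (\<integral>x. coh_kernel s x q \<partial>distr M lborel fst)"
    by (rule integral_distr[symmetric]) (simp_all add: fst_meas)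
  finally show ?thesis .
qed

lemma fict_tomogram_eq_integral_density:
  assumes "s < 1" and "G \<in> borel_measurable borel" and "\<forall>p. 0 \<le> G p"
  shows "fict_tomogram s G p = (\<integral>y. coh_kernel s y p \<partial>density lborel G)"
proof -
  have "fict_tomogram s G p = (\<integral>y. G y *\<^sub>R coh_kernel s y p \<partial>lborel)"
    by (simp add: fict_tomogram_def coh_kernel_eq[OF assms(1)])
  also have "\<dots> = (\<integral>y. coh_kernel s y p \<partial>density lborel G)"
    by (rule integral_density[symmetric]) (use assms(2,3) in auto)
  finally show ?thesis .
qed

lemma vac_tomogram_eq_integral_return:
  assumes "s < 1"
  shows "vac_tomogram s p = (\<integral>y. coh_kernel s y p \<partial>return lborel 0)"
proof -
  have "vac_tomogram s p = coh_kernel s 0 p"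
    by (simp add: vac_tomogram_def coh_kernel_eq[OF assms])
  also have "\<dots> = (\<integral>y. coh_kernel s y p \<partial>return lborel 0)"
    by (rule integral_return[symmetric]) auto
  finally show ?thesis .
qed

theorem mainTheorem2:
  fixes s :: real
    and M :: "(real \<times> real) measure"
    and W :: "real \<Rightarrow> real \<Rightarrow> real"
    and G :: "real \<Rightarrow> real"
  assumes s_range: "-1 \<le> s" "s < 1"
    and P_class: "is_P_distribution M"
    and W_def: "\<forall>q p. W q p = qpd_of_meas s M q p"
    and G_meas: "G \<in> borel_measurable borel"
    and G_nonneg: "\<forall>p. 0 \<le> G p"
    and G_int: "integrable lborel G"
    and G_norm: "(\<integral>p. G p \<partial>lborel) = 1"
    and G_supp: "bounded {p. G p \<noteq> 0}"
  shows "(\<forall>q p. pos_tomogram W q * fict_tomogram s G p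
                 = qpd_of_meas s (distr M lborel fst \<Otimes>\<^sub>M density lborel G) q p)
         \<and> is_P_distribution (distr M lborel fst \<Otimes>\<^sub>M density lborel G)
         \<and> P_classical_qpd s (\<lambda>q p. pos_tomogram W q * fict_tomogram s G p)
         \<and> P_classical_qpd s (\<lambda>q p. pos_tomogram W q * vac_tomogram s p)
         \<and> P_classical_qpd s (\<lambda>q p. pos_tomogram W q * pos_tomogram W p)"
proof -
  have s: "s < 1" by (rule s_range(2))
  define A where "A = distr M lborel fst"
  define B where "B = density lborel G"
  define R where "R = return lborel (0::real)"
  have A: "prob_space A" "sets A = sets borel"
    unfolding A_def using prob_space_distr_fst[OF P_class] by simp_all
  have B: "prob_space B" "sets B = sets borel"
    unfolding B_def using prob_space_density_lborel[OF G_meas G_nonneg G_int G_norm] by simp_all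
  have R: "prob_space R" "sets R = sets borel"
    unfolding R_def by (simp_all add: prob_space_return)
  have W_eq: "W = qpd_of_meas s M" using W_def by auto
  have tom: "pos_tomogram W = (\<lambda>q. \<integral>x. coh_kernel s x q \<partial>A)"
    unfolding W_eq A_def using pos_tomogram_qpd_of_meas[OF s P_class] by auto
  have fict: "fict_tomogram s G = (\<lambda>p. \<integral>y. coh_kernel s y p \<partial>B)"
    unfolding B_def using fict_tomogram_eq_integral_density[OF s G_meas G_nonneg] by auto
  have vac: "vac_tomogram s = (\<lambda>p. \<integral>y. coh_kernel s y p \<partial>R)"
    unfolding R_def using vac_tomogram_eq_integral_return[OF s] by auto
  show ?thesis
    unfolding A_def[symmetric] B_def[symmetric] tom fict vac
    using qpd_of_meas_pair_measure[OF s A(1) B(1) A(2) B(2)] is_P_distribution_pair_measure[OF A(1) B(1) A(2) B(2)]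
      P_classical_qpd_product[OF s A(1) B(1) A(2) B(2)] P_classical_qpd_product[OF s A(1) R(1) A(2) R(2)]
      P_classical_qpd_product[OF s A(1) A(1) A(2) A(2)]
    by simp
qed

end
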